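(* Let $n\ge1$, let $s_1,\dots,s_n\in\mathbb R$ be distinct, and let $a,\rho_0,S,K_j,M_j$ ($1\le j\le n$) be positive constants. For $\zeta\in\mathbb C\setminus i\mathbb R$ let $\Gamma(\zeta)$ be the $n\times n$ matrix $$\Gamma(\zeta)_{ij}=-\zeta\Big(\pm\frac{e^{\mp\zeta|s_i-s_j|/a}}{2a\rho_0\zeta}+\frac{S\delta_{ij}}{K_j+\zeta^2M_j}\Big),\qquad \pm\mathrm{Re}\,\zeta>0.$$ Then for every $\lambda\in i\mathbb R\setminus\{0\}$ the matrices $$\Gamma_\pm(\lambda)^{-1}:=\lim_{\varepsilon\downarrow0}\Gamma(\lambda\pm\varepsilon)^{-1}$$ are well defined. *)

theory Defs
  imports "HOL-Analysis.Analysis"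
begin

text \<open>The n x n matrix Gamma(zeta), indices ranging over a finite type 'n
  (so n = CARD('n) >= 1). The sign choice is +1 if Re zeta > 0 and -1 if
  Re zeta < 0; on the imaginary axis the matrix is not defined by the paper
  and we set it to 0 (it is never used there).\<close>

definition Gamma_mat ::
  "real \<Rightarrow> real \<Rightarrow> real \<Rightarrow> ('n::finite \<Rightarrow> real) \<Rightarrow> ('n \<Rightarrow> real) \<Rightarrow> ('n \<Rightarrow> real)
   \<Rightarrow> complex \<Rightarrow> complex^'n^'n" where
  "Gamma_mat a rho0 S K M s \<zeta> =
     (if Re \<zeta> = 0 then 0 else
      (let \<sigma> = (if Re \<zeta> > 0 then (1::complex) else -1) in
       (\<chi> i j. - \<zeta> * ( \<sigma> * exp (- \<sigma> * \<zeta> * of_real \<bar>s i - s j\<bar> / of_real a)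
                            / (2 * of_real a * of_real rho0 * \<zeta>)
                        + (if i = j then of_real S else 0)
                            / (of_real (K j) + \<zeta>^2 * of_real (M j))))))"

end

theory Submission
  imports Defs
begin

(*
  On the half plane sigma Re zeta > 0 (sigma = +1 or -1) the matrix Gamma(zeta) factors as
  Gamma_reduced(zeta) * diag(S / (K_j + zeta^2 M_j)), where Gamma_reduced is continuous
  across the imaginary axis and the diagonal factor has a continuous inverse there. So
  Gamma(zeta)^-1 has a limit at i t from either side as soon as Gamma_reduced(i t) is
  nonsingular.

  On the axis, Gamma_reduced(i t) = kappa E C - i t I with kappa real and nonzero,
  E_jk = cis(phi |s_j - s_k|) and C = diag(K_j - t^2 M_j) real. If y is in its kernel, put
  x = C y; then E x = i (t / kappa) y, so x^* E x = i (t / kappa) y^* C y is purely imaginary.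
  On the other hand 2 Re (x^* E x) = |u^T x|^2 + |conj(u)^T x|^2 with u_k = cis(phi s_k),
  so u^T x = 0. At an index j where s_j is minimal on the support of x, every |s_j - s_k|
  occurring in the j-th row of E x equals s_k - s_j, so that row is cis(-phi s_j) u^T x = 0.
  Hence y_j = 0 and x_j = 0, a contradiction unless x = 0, and then y = 0.
*)

section \<open>Continuity of the inverse of a matrix times a diagonal matrix\<close>

definition diag_mat :: "('n::finite \<Rightarrow> 'a::zero) \<Rightarrow> 'a^'n^'n" where
  "diag_mat d = (\<chi> i j. if i = j then d j else 0)"

lemma matrix_mul_diag_mat_nth:
  fixes A :: "'a::semiring_1^'n::finite^'m"
  shows "(A ** diag_mat d) $ i $ j = A $ i $ j * d j"
  by (simp add: matrix_matrix_mult_def diag_mat_def if_distrib[of "\<lambda>x. _ * x"] cong: if_cong)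

lemma diag_mat_mult_inverse:
  fixes d :: "'n::finite \<Rightarrow> 'a::field"
  assumes "\<And>j. d j \<noteq> 0"
  shows "diag_mat d ** diag_mat (\<lambda>j. inverse (d j)) = mat 1"
  using assms by (simp add: vec_eq_iff matrix_mul_diag_mat_nth) (simp add: diag_mat_def mat_def)

lemma tendsto_diag_mat:
  fixes d :: "'b \<Rightarrow> 'n::finite \<Rightarrow> 'a::real_normed_vector"
  assumes "\<And>j. ((\<lambda>x. d x j) \<longlongrightarrow> e j) F"
  shows "((\<lambda>x. diag_mat (d x)) \<longlongrightarrow> diag_mat e) F"
  unfolding diag_mat_def
proof (intro tendsto_vec_lambda)
  show "((\<lambda>x. if i = j then d x j else 0) \<longlongrightarrow> (if i = j then e j else 0)) F" for i j
    by (cases "i = j") (simp_all add: assms)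
qed

lemma matrix_inv_right:
  fixes A :: "'a::semiring_1^'n^'m"
  assumes "invertible A"
  shows "A ** matrix_inv A = mat 1"
  using someI_ex[OF assms[unfolded invertible_def]] unfolding matrix_inv_def by blast

lemma matrix_inv_unique:
  fixes A B :: "'a::field^'n::finite^'n"
  assumes AB: "A ** B = mat 1"
  shows "matrix_inv A = B"
proof -
  have "B ** A = mat 1" using AB matrix_left_right_inverse by blast
  then have "matrix_inv A ** A = mat 1"
    using someI_ex[of "\<lambda>A'. A ** A' = mat 1 \<and> A' ** A = mat 1"] AB
    unfolding matrix_inv_def by blast
  have "matrix_inv A = matrix_inv A ** (A ** B)" by (simp add: AB matrix_mul_rid)
  also have "\<dots> = (matrix_inv A ** A) ** B" by (simp add: matrix_mul_assoc)
  also have "\<dots> = B" using \<open>matrix_inv A ** A = mat 1\<close> by (simp add: matrix_mul_lid)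
  finally show ?thesis .
qed

lemma matrix_inv_nth_cramer:
  fixes A :: "'a::field^'n::finite^'n"
  assumes "det A \<noteq> 0"
  shows "matrix_inv A $ k $ j = det (\<chi> i l. if l = k then mat 1 $ i $ j else A $ i $ l) / det A"
proof -
  define x where "x = matrix_inv A *v (\<chi> i. mat 1 $ i $ j)"
  have "A *v x = (\<chi> i. mat 1 $ i $ j)"
    using matrix_inv_right[OF assms[folded invertible_det_nz]]
    by (simp add: x_def matrix_vector_mul_assoc)
  then have "x = (\<chi> k. det (\<chi> i l. if l = k then (\<chi> i. mat 1 $ i $ j) $ i else A $ i $ l) / det A)"
    using cramer[OF assms] by blast
  then have "x $ k = det (\<chi> i l. if l = k then mat 1 $ i $ j else A $ i $ l) / det A"
    by (simp only: vec_lambda_beta)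
  moreover have "x $ k = matrix_inv A $ k $ j"
    by (simp add: x_def matrix_vector_mult_def mat_def if_distrib[of "\<lambda>x. _ * x"] cong: if_cong)
  ultimately show ?thesis by simp
qed

lemma tendsto_det:
  fixes A :: "'b \<Rightarrow> 'a::{comm_ring_1,real_normed_algebra}^'n::finite^'n"
  assumes "(A \<longlongrightarrow> A0) F"
  shows "((\<lambda>x. det (A x)) \<longlongrightarrow> det A0) F"
  unfolding det_def by (intro tendsto_intros assms)

lemma tendsto_matrix_mult:
  fixes A :: "'b \<Rightarrow> 'a::real_normed_algebra_1^'n::finite^'m" and B :: "'b \<Rightarrow> 'a^'k^'n"
  assumes "(A \<longlongrightarrow> A0) F" "(B \<longlongrightarrow> B0) F"
  shows "((\<lambda>x. A x ** B x) \<longlongrightarrow> A0 ** B0) F"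
  unfolding matrix_matrix_mult_def by (intro tendsto_intros assms)

lemma tendsto_matrix_inv:
  fixes A :: "'b \<Rightarrow> 'a::real_normed_field^'n::finite^'n"
  assumes A: "(A \<longlongrightarrow> A0) F" and det0: "det A0 \<noteq> 0"
  shows "((\<lambda>x. matrix_inv (A x)) \<longlongrightarrow> matrix_inv A0) F"
proof (intro vec_tendstoI)
  fix k j
  define C where "C B = (\<chi> i l. if l = k then mat 1 $ i $ j else B $ i $ l)" for B :: "'a^'n^'n"
  have "((\<lambda>x. C (A x)) \<longlongrightarrow> C A0) F"
    unfolding C_def
  proof (intro tendsto_vec_lambda)
    show "((\<lambda>x. if l = k then mat 1 $ i $ j else A x $ i $ l) \<longlongrightarrow>
            (if l = k then mat 1 $ i $ j else A0 $ i $ l)) F" for i l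
      by (cases "l = k") (simp_all add: tendsto_vec_nth A)
  qed
  then have "((\<lambda>x. det (C (A x)) / det (A x)) \<longlongrightarrow> det (C A0) / det A0) F"
    by (intro tendsto_divide tendsto_det A det0)
  moreover have "\<forall>\<^sub>F x in F. det (C (A x)) / det (A x) = matrix_inv (A x) $ k $ j"
    using tendsto_imp_eventually_ne[OF tendsto_det[OF A] det0]
    by eventually_elim (simp add: C_def matrix_inv_nth_cramer)
  ultimately show "((\<lambda>x. matrix_inv (A x) $ k $ j) \<longlongrightarrow> matrix_inv A0 $ k $ j) F"
    by (simp add: tendsto_cong C_def matrix_inv_nth_cramer[OF det0])
qed

lemma tendsto_matrix_inv_mult_diag_mat:
  fixes A G :: "'b \<Rightarrow> 'a::real_normed_field^'n::finite^'n" and d :: "'b \<Rightarrow> 'n \<Rightarrow> 'a"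
  assumes A: "(A \<longlongrightarrow> A0) F" and det0: "det A0 \<noteq> 0"
    and G: "\<forall>\<^sub>F x in F. G x = A x ** diag_mat (d x) \<and> (\<forall>j. d x j \<noteq> 0)"
    and d: "\<And>j. ((\<lambda>x. inverse (d x j)) \<longlongrightarrow> e j) F"
  shows "(\<forall>\<^sub>F x in F. invertible (G x)) \<and>
         ((\<lambda>x. matrix_inv (G x)) \<longlongrightarrow> diag_mat e ** matrix_inv A0) F"
proof -
  define H where "H x = diag_mat (\<lambda>j. inverse (d x j)) ** matrix_inv (A x)" for x
  have GH_inverse: "G x ** H x = mat 1"
    if "G x = A x ** diag_mat (d x)" "\<forall>j. d x j \<noteq> 0" "det (A x) \<noteq> 0" for x
  proof -
    have "G x ** H x = A x ** (diag_mat (d x) ** diag_mat (\<lambda>j. inverse (d x j))) ** matrix_inv (A x)"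
      by (simp add: that(1) H_def matrix_mul_assoc)
    also have "\<dots> = mat 1"
      using that(2,3) by (simp add: diag_mat_mult_inverse matrix_mul_rid matrix_inv_right invertible_det_nz)
    finally show ?thesis .
  qed
  have GH: "\<forall>\<^sub>F x in F. invertible (G x) \<and> matrix_inv (G x) = H x"
    using G tendsto_imp_eventually_ne[OF tendsto_det[OF A] det0]
    by eventually_elim (metis GH_inverse matrix_inv_unique invertible_right_inverse)
  have "(H \<longlongrightarrow> diag_mat e ** matrix_inv A0) F"
    unfolding H_def by (intro tendsto_matrix_mult tendsto_diag_mat tendsto_matrix_inv A det0 d)
  then show ?thesis
    using GH by (auto elim: eventually_mono intro: tendsto_cong[THEN iffD2])
qed

section \<open>Nonsingularity on the imaginary axis\<close>

lemma cis_abs_add_cis_minus_abs: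
  "cis (\<phi> * \<bar>w\<bar>) + cis (- (\<phi> * \<bar>w\<bar>)) = cis (\<phi> * w) + cis (- (\<phi> * w))"
  by (cases "w \<ge> 0") (simp_all add: add.commute)

lemma cis_abs_dist_form_add_cnj:
  fixes s :: "'n::finite \<Rightarrow> real" and x :: "'n \<Rightarrow> complex" and \<phi> :: real
  defines "Q \<equiv> \<Sum>i\<in>UNIV. cnj (x i) * (\<Sum>j\<in>UNIV. cis (\<phi> * \<bar>s i - s j\<bar>) * x j)"
  shows "Q + cnj Q = of_real ((cmod (\<Sum>j\<in>UNIV. x j * cis (\<phi> * s j)))\<^sup>2
                             + (cmod (\<Sum>j\<in>UNIV. x j * cis (- (\<phi> * s j))))\<^sup>2)"
proof -
  define A where "A = (\<Sum>j\<in>UNIV. x j * cis (\<phi> * s j))"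
  define B where "B = (\<Sum>j\<in>UNIV. x j * cis (- (\<phi> * s j)))"
  have "cnj Q = (\<Sum>j\<in>UNIV. \<Sum>i\<in>UNIV. x j * cis (- (\<phi> * \<bar>s j - s i\<bar>)) * cnj (x i))"
    unfolding Q_def by (simp add: sum_distrib_left mult_ac cis_cnj)
  also have "\<dots> = (\<Sum>i\<in>UNIV. \<Sum>j\<in>UNIV. cnj (x i) * cis (- (\<phi> * \<bar>s i - s j\<bar>)) * x j)"
    by (subst sum.swap) (simp add: abs_minus_commute mult_ac)
  finally have "Q + cnj Q = (\<Sum>i\<in>UNIV. \<Sum>j\<in>UNIV.
                  cnj (x i) * (cis (\<phi> * \<bar>s i - s j\<bar>) + cis (- (\<phi> * \<bar>s i - s j\<bar>))) * x j)"
    unfolding Q_def by (simp add: sum_distrib_left distrib_left distrib_right sum.distrib mult_ac)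
  also have "\<dots> = (\<Sum>i\<in>UNIV. \<Sum>j\<in>UNIV.
                  cnj (x i * cis (\<phi> * s i)) * (x j * cis (\<phi> * s j))
                  + cnj (x i * cis (- (\<phi> * s i))) * (x j * cis (- (\<phi> * s j))))"
    by (intro sum.cong refl) (simp add: cis_abs_add_cis_minus_abs cis_cnj cis_mult algebra_simps)
  also have "\<dots> = cnj A * A + cnj B * B"
    by (simp add: A_def B_def sum.distrib cnj_sum sum_product)
  also have "\<dots> = of_real ((cmod A)\<^sup>2 + (cmod B)\<^sup>2)"
    by (simp only: of_real_add complex_norm_square mult.commute)
  finally show ?thesis
    by (simp only: A_def B_def)
qed

lemma cis_abs_dist_row_sum_at_min:
  fixes s :: "'n::finite \<Rightarrow> real" and x :: "'n \<Rightarrow> complex"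
  assumes "(\<Sum>j\<in>UNIV. x j * cis (\<phi> * s j)) = 0" and "\<And>j. x j \<noteq> 0 \<Longrightarrow> s i \<le> s j"
  shows "(\<Sum>j\<in>UNIV. cis (\<phi> * \<bar>s i - s j\<bar>) * x j) = 0"
proof -
  have "(\<Sum>j\<in>UNIV. cis (\<phi> * \<bar>s i - s j\<bar>) * x j)
          = cis (- (\<phi> * s i)) * (\<Sum>j\<in>UNIV. x j * cis (\<phi> * s j))"
    unfolding sum_distrib_left
  proof (intro sum.cong refl)
    show "cis (\<phi> * \<bar>s i - s j\<bar>) * x j = cis (- (\<phi> * s i)) * (x j * cis (\<phi> * s j))" for j
      using assms(2)[of j] by (cases "x j = 0") (simp_all add: cis_mult algebra_simps)
  qed
  with assms(1) show ?thesis by simp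
qed

lemma cis_abs_dist_imag_eigenvector_eq_0:
  fixes s c :: "'n::finite \<Rightarrow> real" and y :: "'n \<Rightarrow> complex"
  assumes r: "r \<noteq> 0"
    and eigen: "\<And>i. (\<Sum>j\<in>UNIV. cis (\<phi> * \<bar>s i - s j\<bar>) * (of_real (c j) * y j)) = \<i> * of_real r * y i"
  shows "y i = 0"
proof -
  define x where "x j = of_real (c j) * y j" for j
  have row: "(\<Sum>j\<in>UNIV. cis (\<phi> * \<bar>s i - s j\<bar>) * x j) = \<i> * of_real r * y i" for i
    using eigen by (simp add: x_def)
  define Q where "Q = (\<Sum>i\<in>UNIV. cnj (x i) * (\<Sum>j\<in>UNIV. cis (\<phi> * \<bar>s i - s j\<bar>) * x j))"
  have "Q = \<i> * of_real r * (\<Sum>i\<in>UNIV. of_real (c i) * (y i * cnj (y i)))"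
    unfolding Q_def row by (simp add: x_def sum_distrib_left mult_ac)
  then have "Q + cnj Q = 0" by (simp add: cnj_sum mult.commute)
  then have A: "(\<Sum>j\<in>UNIV. x j * cis (\<phi> * s j)) = 0"
    unfolding Q_def cis_abs_dist_form_add_cnj of_real_eq_0_iff
    by (simp add: add_nonneg_eq_0_iff)
  have "x = (\<lambda>_. 0)"
  proof (rule ccontr)
    assume "x \<noteq> (\<lambda>_. 0)"
    then have "s ` {j. x j \<noteq> 0} \<noteq> {}" by auto
    then have "Min (s ` {j. x j \<noteq> 0}) \<in> s ` {j. x j \<noteq> 0}" by (intro Min_in) simp_all
    then obtain i where i: "x i \<noteq> 0" "s i = Min (s ` {j. x j \<noteq> 0})" by auto
    then have "(\<Sum>j\<in>UNIV. cis (\<phi> * \<bar>s i - s j\<bar>) * x j) = 0"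
      by (intro cis_abs_dist_row_sum_at_min A) simp
    then show False using row[of i] r i(1) by (simp add: x_def)
  qed
  then show ?thesis using row[of i] r by simp
qed

lemma det_cis_abs_dist_sub_imag_ne_0:
  fixes s c :: "'n::finite \<Rightarrow> real" and \<kappa> \<phi> \<tau> :: real
  assumes "\<kappa> \<noteq> 0" and "\<tau> \<noteq> 0"
  shows "det (\<chi> i j. of_real \<kappa> * cis (\<phi> * \<bar>s i - s j\<bar>) * of_real (c j)
                 - (if i = j then \<i> * of_real \<tau> else 0) :: complex^'n^'n) \<noteq> 0"
    (is "det ?P \<noteq> 0")
proof
  assume "det ?P = 0"
  then have "\<not> (\<exists>B. B ** ?P = mat 1)"
    using invertible_det_nz invertible_left_inverse by blast
  then obtain y where y: "?P *v y = 0" "y \<noteq> 0"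
    unfolding matrix_left_invertible_ker by blast
  have eigen: "(\<Sum>j\<in>UNIV. cis (\<phi> * \<bar>s i - s j\<bar>) * (of_real (c j) * y $ j))
                 = \<i> * of_real (\<tau> / \<kappa>) * y $ i" for i
  proof -
    have "(?P *v y) $ i = (\<Sum>j\<in>UNIV. of_real \<kappa> * (cis (\<phi> * \<bar>s i - s j\<bar>) * (of_real (c j) * y $ j))
                           - (if i = j then \<i> * of_real \<tau> * y $ i else 0))"
      unfolding matrix_vector_mult_def vec_lambda_beta
      by (intro sum.cong refl) (simp add: left_diff_distrib mult.assoc)
    also have "\<dots> = of_real \<kappa> * (\<Sum>j\<in>UNIV. cis (\<phi> * \<bar>s i - s j\<bar>) * (of_real (c j) * y $ j))
                      - \<i> * of_real \<tau> * y $ i"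
      by (simp add: sum_subtractf sum_distrib_left)
    finally show ?thesis using y(1) assms(1) by (simp add: field_simps)
  qed
  have "y $ i = 0" for i
    by (rule cis_abs_dist_imag_eigenvector_eq_0[where y = "\<lambda>j. y $ j", OF _ eigen]) (simp add: assms)
  with y(2) show False by (simp add: vec_eq_iff)
qed

section \<open>The matrix Gamma near the imaginary axis\<close>

definition Gamma_reduced ::
  "real \<Rightarrow> real \<Rightarrow> real \<Rightarrow> ('n::finite \<Rightarrow> real) \<Rightarrow> ('n \<Rightarrow> real) \<Rightarrow> ('n \<Rightarrow> real)
   \<Rightarrow> real \<Rightarrow> complex \<Rightarrow> complex^'n^'n" where
  "Gamma_reduced a rho0 S K M s \<sigma> \<zeta> =
     (\<chi> i j. - of_real \<sigma> * exp (- of_real \<sigma> * \<zeta> * of_real \<bar>s i - s j\<bar> / of_real a)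
                * (of_real (K j) + \<zeta>^2 * of_real (M j)) / (2 * of_real a * of_real rho0 * of_real S)
              - (if i = j then \<zeta> else 0))"

lemma Gamma_mat_eq_Gamma_reduced_mult_diag_mat:
  assumes \<sigma>: "\<sigma> = 1 \<or> \<sigma> = -1" and Re: "0 < \<sigma> * Re \<zeta>"
    and "a \<noteq> 0" "rho0 \<noteq> 0" "S \<noteq> 0" and D: "\<And>j. of_real (K j) + \<zeta>^2 * of_real (M j) \<noteq> 0"
  shows "Gamma_mat a rho0 S K M s \<zeta> =
           Gamma_reduced a rho0 S K M s \<sigma> \<zeta> ** diag_mat (\<lambda>j. of_real S / (of_real (K j) + \<zeta>^2 * of_real (M j)))"
  unfolding vec_eq_iff matrix_mul_diag_mat_nth
proof (intro allI)
  fix i j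
  have field_identity: "- z * (g * X / (2 * A * R * z) + (if b then C else 0) / D)
                          = (- g * X * D / (2 * A * R * C) - (if b then z else 0)) * (C / D)"
    if "z \<noteq> 0" "A \<noteq> 0" "R \<noteq> 0" "C \<noteq> 0" "D \<noteq> 0" for z g X A R C D :: complex and b
    using that by (cases b) (simp_all add: field_simps)
  have "Re \<zeta> \<noteq> 0" "\<zeta> \<noteq> 0" using Re by auto
  moreover have "(if Re \<zeta> > 0 then 1 else -1) = complex_of_real \<sigma>"
    using \<sigma> Re by (auto simp: zero_less_mult_iff)
  ultimately show "Gamma_mat a rho0 S K M s \<zeta> $ i $ j
      = Gamma_reduced a rho0 S K M s \<sigma> \<zeta> $ i $ j * (of_real S / (of_real (K j) + \<zeta>^2 * of_real (M j)))"
    unfolding Gamma_mat_def Gamma_reduced_def Let_def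
    by (simp only: if_False vec_lambda_beta) (rule field_identity, use assms D[of j] in simp_all)
qed

lemma det_Gamma_reduced_imag_axis_ne_0:
  assumes "\<sigma> \<noteq> 0" "a \<noteq> 0" "rho0 \<noteq> 0" "S \<noteq> 0" "t \<noteq> 0"
  shows "det (Gamma_reduced a rho0 S K M s \<sigma> (\<i> * of_real t)) \<noteq> 0"
proof -
  have "Gamma_reduced a rho0 S K M s \<sigma> (\<i> * of_real t) =
          (\<chi> i j. of_real (- \<sigma> / (2 * a * rho0 * S)) * cis ((- \<sigma> * t / a) * \<bar>s i - s j\<bar>)
                     * of_real (K j - t\<^sup>2 * M j) - (if i = j then \<i> * of_real t else 0))"
  proof -
    have "exp (- of_real \<sigma> * (\<i> * of_real t) * of_real \<bar>s i - s j\<bar> / of_real a)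
            = cis ((- \<sigma> * t / a) * \<bar>s i - s j\<bar>)" for i j
      unfolding cis_conv_exp by (rule arg_cong[where f = exp]) (simp add: field_simps)
    then show ?thesis
      using assms by (simp add: Gamma_reduced_def vec_eq_iff power_mult_distrib field_simps)
  qed
  also have "det \<dots> \<noteq> 0"
    by (rule det_cis_abs_dist_sub_imag_ne_0) (use assms in simp_all)
  finally show ?thesis .
qed

lemma of_real_add_square_mult_of_real_ne_0:
  assumes "Re z \<noteq> 0" "Im z \<noteq> 0" "m \<noteq> 0"
  shows "of_real k + z\<^sup>2 * of_real m \<noteq> 0"
proof
  assume "of_real k + z\<^sup>2 * of_real m = 0"
  then have "Im (of_real k + z\<^sup>2 * of_real m) = 0" by simp
  then show False using assms by (simp add: power2_eq_square)
qed

lemma filterlim_at_right_imag_axis: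
  assumes "\<sigma> \<noteq> 0"
  shows "filterlim (\<lambda>\<epsilon>. \<i> * of_real t + of_real (\<sigma> * \<epsilon>))
           (at (\<i> * of_real t) within {\<zeta>. 0 < \<sigma> * Re \<zeta>}) (at_right 0)"
proof (rule filterlim_at_withinI)
  show "((\<lambda>\<epsilon>. \<i> * of_real t + of_real (\<sigma> * \<epsilon>)) \<longlongrightarrow> \<i> * of_real t) (at_right 0)"
    by (auto intro!: tendsto_eq_intros)
  show "\<forall>\<^sub>F \<epsilon> in at_right 0. \<i> * of_real t + of_real (\<sigma> * \<epsilon>) \<in> {\<zeta>. 0 < \<sigma> * Re \<zeta>} - {\<i> * of_real t}"
    using eventually_at_right_less[of 0]
    by eventually_elim
       (use assms in \<open>auto simp: complex_eq_iff mult.assoc [symmetric] zero_less_mult_iff mult_neg_pos\<close>)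
qed

lemma Gamma_mat_inverse_tendsto_imag_axis:
  fixes s K M :: "'n::finite \<Rightarrow> real" and a rho0 S t \<sigma> :: real
  assumes \<sigma>: "\<sigma> = 1 \<or> \<sigma> = -1" and a: "a \<noteq> 0" and rho0: "rho0 \<noteq> 0" and S: "S \<noteq> 0"
    and M: "\<And>j. M j \<noteq> 0" and t: "t \<noteq> 0"
  defines "F \<equiv> at (\<i> * of_real t) within {\<zeta>. 0 < \<sigma> * Re \<zeta>}"
  shows "(\<forall>\<^sub>F \<zeta> in F. invertible (Gamma_mat a rho0 S K M s \<zeta>)) \<and>
         ((\<lambda>\<zeta>. matrix_inv (Gamma_mat a rho0 S K M s \<zeta>)) \<longlongrightarrow>
            diag_mat (\<lambda>j. of_real ((K j - t\<^sup>2 * M j) / S))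
            ** matrix_inv (Gamma_reduced a rho0 S K M s \<sigma> (\<i> * of_real t))) F"
proof -
  define D where "D \<zeta> j = (of_real (K j) + \<zeta>\<^sup>2 * of_real (M j) :: complex)" for \<zeta> j
  have lim: "((\<lambda>\<zeta>. \<zeta>) \<longlongrightarrow> \<i> * of_real t) F"
    unfolding F_def by (rule tendsto_ident_at)
  have "\<forall>\<^sub>F \<zeta> in F. 0 < \<sigma> * Re \<zeta>"
    unfolding F_def by (simp add: eventually_at_filter)
  moreover have "\<forall>\<^sub>F \<zeta> in F. Im \<zeta> \<noteq> 0"
    using tendsto_imp_eventually_ne[OF tendsto_Im[OF lim]] t by simp
  ultimately have factor: "\<forall>\<^sub>F \<zeta> in F.
      Gamma_mat a rho0 S K M s \<zeta> = Gamma_reduced a rho0 S K M s \<sigma> \<zeta> ** diag_mat (\<lambda>j. of_real S / D \<zeta> j)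
      \<and> (\<forall>j. of_real S / D \<zeta> j \<noteq> 0)"
  proof eventually_elim
    case (elim \<zeta>)
    then have "D \<zeta> j \<noteq> 0" for j
      unfolding D_def by (intro of_real_add_square_mult_of_real_ne_0 M) auto
    then show ?case
      using elim \<sigma> a rho0 S by (simp add: D_def Gamma_mat_eq_Gamma_reduced_mult_diag_mat)
  qed
  have diag_lim: "((\<lambda>\<zeta>. inverse (of_real S / D \<zeta> j)) \<longlongrightarrow> of_real ((K j - t\<^sup>2 * M j) / S)) F" for j
  proof -
    have "((\<lambda>\<zeta>. D \<zeta> j / of_real S) \<longlongrightarrow> D (\<i> * of_real t) j / of_real S) F"
      unfolding D_def by (intro tendsto_intros lim) (simp add: S)
    then show ?thesis by (simp add: D_def power_mult_distrib)
  qed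
  have reduced_lim: "(Gamma_reduced a rho0 S K M s \<sigma> \<longlongrightarrow> Gamma_reduced a rho0 S K M s \<sigma> (\<i> * of_real t)) F"
    unfolding Gamma_reduced_def using a rho0 S by (intro tendsto_intros lim) (simp_all add: lim)
  have "det (Gamma_reduced a rho0 S K M s \<sigma> (\<i> * of_real t)) \<noteq> 0"
    using \<sigma> a rho0 S t by (intro det_Gamma_reduced_imag_axis_ne_0) auto
  from tendsto_matrix_inv_mult_diag_mat[OF reduced_lim this factor diag_lim] show ?thesis .
qed

theorem mainTheorem2:
  fixes s K M :: "'n::finite \<Rightarrow> real" and a rho0 S t :: real
  assumes "inj s"
    and "a > 0" and "rho0 > 0" and "S > 0"
    and "\<And>j. K j > 0" and "\<And>j. M j > 0"
    and "t \<noteq> 0"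
  shows "\<exists>Lp Lm :: complex^'n^'n.
           (\<forall>\<^sub>F \<epsilon> in at_right (0::real).
              invertible (Gamma_mat a rho0 S K M s (\<i> * of_real t + of_real \<epsilon>))) \<and>
           ((\<lambda>\<epsilon>. matrix_inv (Gamma_mat a rho0 S K M s (\<i> * of_real t + of_real \<epsilon>)))
              \<longlongrightarrow> Lp) (at_right 0) \<and>
           (\<forall>\<^sub>F \<epsilon> in at_right (0::real).
              invertible (Gamma_mat a rho0 S K M s (\<i> * of_real t - of_real \<epsilon>))) \<and>
           ((\<lambda>\<epsilon>. matrix_inv (Gamma_mat a rho0 S K M s (\<i> * of_real t - of_real \<epsilon>)))
              \<longlongrightarrow> Lm) (at_right 0)"
proof -
  have nz: "a \<noteq> 0" "rho0 \<noteq> 0" "S \<noteq> 0" "M j \<noteq> 0" for j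
    using assms by (metis less_irrefl)+
  have "(\<forall>\<^sub>F \<epsilon> in at_right 0. invertible (Gamma_mat a rho0 S K M s (\<i> * of_real t + of_real (\<sigma> * \<epsilon>)))) \<and>
        (\<exists>L. ((\<lambda>\<epsilon>. matrix_inv (Gamma_mat a rho0 S K M s (\<i> * of_real t + of_real (\<sigma> * \<epsilon>))))
                \<longlongrightarrow> L) (at_right 0))"
    if \<sigma>: "\<sigma> = 1 \<or> \<sigma> = -1" for \<sigma>
  proof -
    have approach: "filterlim (\<lambda>\<epsilon>. \<i> * of_real t + of_real (\<sigma> * \<epsilon>))
                      (at (\<i> * of_real t) within {\<zeta>. 0 < \<sigma> * Re \<zeta>}) (at_right 0)"
      using \<sigma> by (intro filterlim_at_right_imag_axis) auto
    note half_plane = Gamma_mat_inverse_tendsto_imag_axis[where K = K and M = M and s = s, OF \<sigma> nz assms(7)]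
    show ?thesis
      using eventually_compose_filterlim[OF half_plane[THEN conjunct1] approach]
        filterlim_compose[OF half_plane[THEN conjunct2] approach] by blast
  qed
  from this[of 1] this[of "-1"] show ?thesis by simp
qed

end
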